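(* Let $\mathcal C$ be a compact and convex set of randomized policies. Let $\mu\in(0,1/K]$ and for any $W\in\mathcal C$ let $W'(x,a)=(1-K\mu)W(x,a)+\mu$. Then for all distributions $D$ (with marginal $D_X$ on contexts), \[\min_{W\in\mathcal C}\max_{Z\in\mathcal C}\ \mathbb{E}_{x\sim D_X}\mathbb{E}_{a\sim Z(x,\cdot)}\Bigl[\frac1{W'(x,a)}\Bigr]\le\frac{K}{1-K\mu}.\]
   Context: $A$ is a set of $K$ actions and $X$ a set of contexts. A randomized policy is a map $W:X\times A\to[0,1]$ such that $W(x,\cdot)$ is a probability distribution on $A$ for every $x$; $a\sim Z(x,\cdot)$ means $a$ is drawn from that distribution. $D$ is a distribution over $X\times[0,1]^K$ with marginal $D_X$ on $X$. *)

theory Defs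
  imports "HOL-Probability.Probability"
begin

text \<open>A randomized policy: a map W : X x A -> [0,1] with W(x,.) a probability
distribution on the finite action type 'a (K = CARD('a)).\<close>
definition policy :: "('x \<Rightarrow> 'a::finite \<Rightarrow> real) \<Rightarrow> bool" where
  "policy W \<longleftrightarrow> (\<forall>x a. 0 \<le> W x a \<and> W x a \<le> 1) \<and> (\<forall>x. (\<Sum>a\<in>UNIV. W x a) = 1)"

definition policy_convex :: "('x \<Rightarrow> 'a \<Rightarrow> real) set \<Rightarrow> bool" where
  "policy_convex C \<longleftrightarrow>
     (\<forall>W\<in>C. \<forall>Z\<in>C. \<forall>t::real. 0 \<le> t \<and> t \<le> 1 \<longrightarrow> (\<lambda>x a. t * W x a + (1 - t) * Z x a) \<in> C)"

definition smooth_policy :: "real \<Rightarrow> ('x \<Rightarrow> 'a::finite \<Rightarrow> real) \<Rightarrow> 'x \<Rightarrow> 'a \<Rightarrow> real" where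
  "smooth_policy \<mu> W x a = (1 - real CARD('a) * \<mu>) * W x a + \<mu>"

definition inv_prob_risk ::
  "'x measure \<Rightarrow> real \<Rightarrow> ('x \<Rightarrow> 'a::finite \<Rightarrow> real) \<Rightarrow> ('x \<Rightarrow> 'a \<Rightarrow> real) \<Rightarrow> real" where
  "inv_prob_risk DX \<mu> W Z = (\<integral>x. (\<Sum>a\<in>UNIV. Z x a * (1 / smooth_policy \<mu> W x a)) \<partial>DX)"

end

theory Submission
  imports Defs
begin

text \<open>Let \<open>\<Phi>(W) = E\<^sub>x \<Sum>\<^sub>a ln W'(x,a)\<close> be the log-barrier of the smoothed policy. It is
bounded above by \<open>0\<close>, so some \<open>W \<in> \<C>\<close> comes within \<open>\<delta>\<close> of its supremum over \<open>\<C>\<close>. Moving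
from \<open>W\<close> towards any \<open>Z \<in> \<C>\<close> by a step \<open>t\<close> stays in \<open>\<C>\<close>, and since \<open>W' \<ge> \<mu>\<close>, concavity of
\<open>ln\<close> shows that \<open>\<Phi>\<close> gains at least \<open>t\<close> times the slope \<open>E\<^sub>x \<Sum>\<^sub>a (Z' - W')/W'\<close> minus
\<open>K t\<^sup>2/\<mu>\<^sup>2\<close>. Near-maximality thus bounds the slope by \<open>K\<mu>\<close> for suitable \<open>t\<close> and \<open>\<delta>\<close>. Finally
\<open>(Z' - W')/W' = (1 - K\<mu>) Z/W' + \<mu>/W' - 1\<close> and \<open>W' \<le> 1\<close>, so the slope is at least
\<open>(1 - K\<mu>) E\<^sub>x \<Sum>\<^sub>a Z/W' - K(1 - \<mu>)\<close>, which gives the bound \<open>K/(1 - K\<mu>)\<close>.\<close>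

definition measurable_policy :: "'x measure \<Rightarrow> ('x \<Rightarrow> 'a::finite \<Rightarrow> real) \<Rightarrow> bool" where
  "measurable_policy M W \<longleftrightarrow> policy W \<and> (\<forall>a. (\<lambda>x. W x a) \<in> borel_measurable M)"

definition policy_mix :: "real \<Rightarrow> ('x \<Rightarrow> 'a \<Rightarrow> real) \<Rightarrow> ('x \<Rightarrow> 'a \<Rightarrow> real) \<Rightarrow> 'x \<Rightarrow> 'a \<Rightarrow> real" where
  "policy_mix t Z W = (\<lambda>x a. t * Z x a + (1 - t) * W x a)"

definition log_barrier :: "'x measure \<Rightarrow> real \<Rightarrow> ('x \<Rightarrow> 'a::finite \<Rightarrow> real) \<Rightarrow> real" where
  "log_barrier DX \<mu> W = (\<integral>x. (\<Sum>a\<in>UNIV. ln (smooth_policy \<mu> W x a)) \<partial>DX)"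

definition barrier_slope ::
  "'x measure \<Rightarrow> real \<Rightarrow> ('x \<Rightarrow> 'a::finite \<Rightarrow> real) \<Rightarrow> ('x \<Rightarrow> 'a \<Rightarrow> real) \<Rightarrow> real" where
  "barrier_slope DX \<mu> W Z =
     (\<integral>x. (\<Sum>a\<in>UNIV. (smooth_policy \<mu> Z x a - smooth_policy \<mu> W x a) / smooth_policy \<mu> W x a) \<partial>DX)"

lemma policy_convex_mix:
  "policy_convex C \<Longrightarrow> W \<in> C \<Longrightarrow> Z \<in> C \<Longrightarrow> 0 \<le> t \<Longrightarrow> t \<le> 1 \<Longrightarrow> policy_mix t Z W \<in> C"
  unfolding policy_convex_def policy_mix_def by blast

lemma measurable_policy_mix:
  assumes "measurable_policy M W" "measurable_policy M Z" "0 \<le> t" "t \<le> 1"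
  shows "measurable_policy M (policy_mix t Z W)"
proof -
  have "0 \<le> t * Z x a + (1 - t) * W x a \<and> t * Z x a + (1 - t) * W x a \<le> 1" for x a
  proof -
    have "0 \<le> W x a" "W x a \<le> 1" "0 \<le> Z x a" "Z x a \<le> 1"
      using assms(1,2) unfolding measurable_policy_def policy_def by auto
    then show ?thesis
      using assms(3,4) convex_bound_le[of "Z x a" 1 "W x a" t "1 - t"] by simp
  qed
  moreover have "(\<Sum>a\<in>UNIV. t * Z x a + (1 - t) * W x a) = 1" for x
    using assms(1,2) unfolding measurable_policy_def policy_def
    by (simp add: sum.distrib flip: sum_distrib_left)
  moreover have "(\<lambda>x. t * Z x a + (1 - t) * W x a) \<in> borel_measurable M" for a
  proof -
    have "(\<lambda>x. W x a) \<in> borel_measurable M" "(\<lambda>x. Z x a) \<in> borel_measurable M"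
      using assms(1,2) unfolding measurable_policy_def by auto
    then show ?thesis by measurable
  qed
  ultimately show ?thesis unfolding measurable_policy_def policy_def policy_mix_def by auto
qed

lemma smooth_policy_mix:
  "smooth_policy \<mu> (policy_mix t Z W) x a
     = smooth_policy \<mu> W x a + t * (smooth_policy \<mu> Z x a - smooth_policy \<mu> W x a)"
  unfolding smooth_policy_def policy_mix_def by (simp add: algebra_simps)

lemma smooth_policy_bounds:
  fixes W :: "'x \<Rightarrow> 'a::finite \<Rightarrow> real"
  assumes "policy W" "0 < \<mu>" "real CARD('a) * \<mu> \<le> 1"
  shows "\<mu> \<le> smooth_policy \<mu> W x a" "smooth_policy \<mu> W x a \<le> 1"
proof -
  have W: "0 \<le> W x a" "W x a \<le> 1" using assms(1) unfolding policy_def by auto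
  have "1 \<le> real CARD('a)" by simp
  then have "\<mu> \<le> real CARD('a) * \<mu>" using assms(2) by simp
  then have "(1 - real CARD('a) * \<mu>) * W x a \<le> 1 - \<mu>"
    using W assms(3) mult_left_le[of "W x a" "1 - real CARD('a) * \<mu>"] by linarith
  with W assms(3) show "\<mu> \<le> smooth_policy \<mu> W x a" "smooth_policy \<mu> W x a \<le> 1"
    unfolding smooth_policy_def by auto
qed

lemma ln_mix_ge:
  fixes w z t \<mu> :: real
  assumes "0 < \<mu>" "\<mu> \<le> w" "w \<le> 1" "\<mu> \<le> z" "z \<le> 1" "0 \<le> t" "t \<le> 1"
  shows "t * (z - w) / w - t\<^sup>2 / \<mu>\<^sup>2 \<le> ln (w + t * (z - w)) - ln w"
proof -
  define v where "v = w + t * (z - w)"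
  have "\<mu> \<le> v"
  proof -
    have "(1 - t) * \<mu> \<le> (1 - t) * w" "t * \<mu> \<le> t * z"
      using assms by (auto intro: mult_left_mono)
    then show ?thesis unfolding v_def by (simp add: algebra_simps)
  qed
  then have pos: "0 < w" "0 < v" using assms by auto
  have "ln (w / v) \<le> w / v - 1" using pos by (intro ln_le_minus_one) simp
  then have tangent: "t * (z - w) / v \<le> ln v - ln w"
    using pos by (simp add: ln_div field_simps v_def)
  have "t\<^sup>2 * (z - w)\<^sup>2 \<le> t\<^sup>2"
    using assms abs_square_le_1[of "z - w"] by (simp add: mult_left_le)
  moreover have "\<mu>\<^sup>2 \<le> v * w"
    using \<open>\<mu> \<le> v\<close> assms by (metis power2_eq_square mult_mono less_imp_le order_trans)
  ultimately have "t\<^sup>2 * (z - w)\<^sup>2 / (v * w) \<le> t\<^sup>2 / \<mu>\<^sup>2"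
    using assms pos by (meson frac_le zero_le_power2 zero_less_power)
  moreover have "t * (z - w) / v - t * (z - w) / w = - (t\<^sup>2 * (z - w)\<^sup>2) / (v * w)"
    using pos by (simp add: field_simps v_def power2_eq_square)
  ultimately show ?thesis using tangent unfolding v_def by linarith
qed

lemma inv_prob_sum_le_slope:
  fixes W Z :: "'x \<Rightarrow> 'a::finite \<Rightarrow> real"
  assumes "policy W" "0 < \<mu>" "real CARD('a) * \<mu> \<le> 1"
  shows "(1 - real CARD('a) * \<mu>) * (\<Sum>a\<in>UNIV. Z x a * (1 / smooth_policy \<mu> W x a))
     \<le> (\<Sum>a\<in>UNIV. (smooth_policy \<mu> Z x a - smooth_policy \<mu> W x a) / smooth_policy \<mu> W x a)
        + real CARD('a) * (1 - \<mu>)"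
proof -
  let ?K = "real CARD('a)" and ?W' = "smooth_policy \<mu> W x"
  have pos: "0 < ?W' a" for a
    using smooth_policy_bounds[OF assms] assms(2) by (meson less_le_trans)
  have slope: "(smooth_policy \<mu> Z x a - ?W' a) / ?W' a
      = (1 - ?K * \<mu>) * (Z x a * (1 / ?W' a)) + \<mu> * (1 / ?W' a) - 1" for a
  proof -
    have "smooth_policy \<mu> Z x a = (1 - ?K * \<mu>) * Z x a + \<mu>"
      unfolding smooth_policy_def ..
    then show ?thesis using pos[of a] by (simp add: field_simps)
  qed
  have "?K = (\<Sum>a\<in>(UNIV :: 'a set). 1)" by simp
  also have "\<dots> \<le> (\<Sum>a\<in>UNIV. 1 / ?W' a)"
    using smooth_policy_bounds[OF assms] pos by (intro sum_mono) simp
  finally have "?K * \<mu> \<le> \<mu> * (\<Sum>a\<in>UNIV. 1 / ?W' a)"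
    using assms(2) by (simp add: mult.commute)
  then show ?thesis
    unfolding slope by (simp add: sum_subtractf sum.distrib sum_distrib_left algebra_simps)
qed

context
  fixes DX :: "'x measure" and \<mu> :: real
  assumes DX: "prob_space DX" and mu_pos: "0 < \<mu>" and mu_le: "real CARD('a::finite) * \<mu> \<le> 1"
begin

interpretation prob_space DX by (fact DX)

lemma integrable_bounded_sum:
  fixes f :: "'a \<Rightarrow> 'x \<Rightarrow> real"
  assumes "\<And>a. f a \<in> borel_measurable DX" "\<And>a x. \<bar>f a x\<bar> \<le> B"
  shows "integrable DX (\<lambda>x. \<Sum>a\<in>UNIV. f a x)"
  by (intro Bochner_Integration.integrable_sum, rule integrable_const_bound[where B = B])
    (use assms in auto)

lemma smooth_policy_measurable:
  fixes W :: "'x \<Rightarrow> 'a \<Rightarrow> real"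
  assumes "measurable_policy DX W"
  shows "(\<lambda>x. smooth_policy \<mu> W x a) \<in> borel_measurable DX"
  using assms unfolding measurable_policy_def smooth_policy_def
  by (intro borel_measurable_add borel_measurable_times) auto

lemma smooth_policy_pos:
  fixes W :: "'x \<Rightarrow> 'a \<Rightarrow> real"
  shows "policy W \<Longrightarrow> 0 < smooth_policy \<mu> W x a"
  using less_le_trans[OF mu_pos smooth_policy_bounds(1)[OF _ mu_pos mu_le]] .

lemma integrable_log_barrier:
  fixes W :: "'x \<Rightarrow> 'a \<Rightarrow> real"
  assumes "measurable_policy DX W"
  shows "integrable DX (\<lambda>x. \<Sum>a\<in>UNIV. ln (smooth_policy \<mu> W x a))"
proof (rule integrable_bounded_sum)
  show "(\<lambda>x. ln (smooth_policy \<mu> W x a)) \<in> borel_measurable DX" for a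
    using smooth_policy_measurable[OF assms] by measurable
  have "policy W" using assms unfolding measurable_policy_def ..
  from smooth_policy_bounds[OF this mu_pos mu_le] mu_pos
  show "\<bar>ln (smooth_policy \<mu> W x a)\<bar> \<le> - ln \<mu>" for a x
    by (smt (verit) ln_le_cancel_iff ln_le_zero_iff)
qed

lemma log_barrier_nonpos:
  fixes W :: "'x \<Rightarrow> 'a \<Rightarrow> real"
  assumes "policy W"
  shows "log_barrier DX \<mu> W \<le> 0"
proof -
  have "0 \<le> (\<integral>x. - (\<Sum>a\<in>UNIV. ln (smooth_policy \<mu> W x a)) \<partial>DX)"
    using smooth_policy_bounds[OF assms mu_pos mu_le] smooth_policy_pos[OF assms]
    by (intro integral_nonneg_AE AE_I2) (simp add: sum_nonpos)
  then show ?thesis unfolding log_barrier_def by simp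
qed

lemma integrable_barrier_slope:
  fixes W Z :: "'x \<Rightarrow> 'a \<Rightarrow> real"
  assumes "measurable_policy DX W" "measurable_policy DX Z"
  shows "integrable DX (\<lambda>x. \<Sum>a\<in>UNIV.
    (smooth_policy \<mu> Z x a - smooth_policy \<mu> W x a) / smooth_policy \<mu> W x a)"
proof (rule integrable_bounded_sum)
  show "(\<lambda>x. (smooth_policy \<mu> Z x a - smooth_policy \<mu> W x a) / smooth_policy \<mu> W x a)
      \<in> borel_measurable DX" for a
    using smooth_policy_measurable[OF assms(1)] smooth_policy_measurable[OF assms(2)] by measurable
  have "policy W" "policy Z" using assms unfolding measurable_policy_def by auto
  note W = smooth_policy_bounds[OF \<open>policy W\<close> mu_pos mu_le]
    and Z = smooth_policy_bounds[OF \<open>policy Z\<close> mu_pos mu_le]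
  fix x a
  have "\<bar>smooth_policy \<mu> Z x a - smooth_policy \<mu> W x a\<bar> / smooth_policy \<mu> W x a \<le> 1 / \<mu>"
    using W[of x a] Z[of x a] mu_pos by (intro frac_le) auto
  then show "\<bar>(smooth_policy \<mu> Z x a - smooth_policy \<mu> W x a) / smooth_policy \<mu> W x a\<bar> \<le> 1 / \<mu>"
    using smooth_policy_pos[OF \<open>policy W\<close>, of x a] by (simp add: abs_divide)
qed

lemma integrable_inv_prob_risk:
  fixes W Z :: "'x \<Rightarrow> 'a \<Rightarrow> real"
  assumes "measurable_policy DX W" "measurable_policy DX Z"
  shows "integrable DX (\<lambda>x. \<Sum>a\<in>UNIV. Z x a * (1 / smooth_policy \<mu> W x a))"
proof (rule integrable_bounded_sum)
  show "(\<lambda>x. Z x a * (1 / smooth_policy \<mu> W x a)) \<in> borel_measurable DX" for a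
    using assms(2) smooth_policy_measurable[OF assms(1)] unfolding measurable_policy_def
    by (intro borel_measurable_times borel_measurable_divide) auto
  have "policy W" "policy Z" using assms unfolding measurable_policy_def by auto
  fix x a
  have Z: "0 \<le> Z x a" "Z x a \<le> 1" using \<open>policy Z\<close> unfolding policy_def by auto
  have "Z x a / smooth_policy \<mu> W x a \<le> 1 / \<mu>"
    using smooth_policy_bounds[OF \<open>policy W\<close> mu_pos mu_le] Z mu_pos by (intro frac_le) auto
  then show "\<bar>Z x a * (1 / smooth_policy \<mu> W x a)\<bar> \<le> 1 / \<mu>"
    using Z smooth_policy_pos[OF \<open>policy W\<close>, of x a] by simp
qed

lemma log_barrier_mix_ge:
  fixes W Z :: "'x \<Rightarrow> 'a \<Rightarrow> real"
  assumes W: "measurable_policy DX W" and Z: "measurable_policy DX Z" and t: "0 \<le> t" "t \<le> 1"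
  shows "t * barrier_slope DX \<mu> W Z - real CARD('a) * (t\<^sup>2 / \<mu>\<^sup>2)
    \<le> log_barrier DX \<mu> (policy_mix t Z W) - log_barrier DX \<mu> W"
proof -
  let ?K = "real CARD('a)" and ?W' = "smooth_policy \<mu> W" and ?Z' = "smooth_policy \<mu> Z"
    and ?M' = "smooth_policy \<mu> (policy_mix t Z W)"
  have "policy W" "policy Z" using W Z unfolding measurable_policy_def by auto
  have pointwise: "t * (\<Sum>a\<in>UNIV. (?Z' x a - ?W' x a) / ?W' x a) - ?K * (t\<^sup>2 / \<mu>\<^sup>2)
    \<le> (\<Sum>a\<in>UNIV. ln (?M' x a)) - (\<Sum>a\<in>UNIV. ln (?W' x a))" for x
  proof -
    have "t * (\<Sum>a\<in>UNIV. (?Z' x a - ?W' x a) / ?W' x a) - ?K * (t\<^sup>2 / \<mu>\<^sup>2)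
      = (\<Sum>a\<in>UNIV. t * (?Z' x a - ?W' x a) / ?W' x a - t\<^sup>2 / \<mu>\<^sup>2)"
      by (simp add: sum_subtractf sum_distrib_left)
    also have "\<dots> \<le> (\<Sum>a\<in>UNIV. ln (?M' x a) - ln (?W' x a))"
      unfolding smooth_policy_mix
      using smooth_policy_bounds[OF \<open>policy W\<close> mu_pos mu_le]
        smooth_policy_bounds[OF \<open>policy Z\<close> mu_pos mu_le]
      by (intro sum_mono ln_mix_ge) (use mu_pos t in auto)
    finally show ?thesis by (simp add: sum_subtractf)
  qed
  note int_W = integrable_log_barrier[OF W]
    and int_mix = integrable_log_barrier[OF measurable_policy_mix[OF W Z t]]
    and int_slope = integrable_barrier_slope[OF W Z]
  have "t * barrier_slope DX \<mu> W Z - ?K * (t\<^sup>2 / \<mu>\<^sup>2)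
      = (\<integral>x. t * (\<Sum>a\<in>UNIV. (?Z' x a - ?W' x a) / ?W' x a) - ?K * (t\<^sup>2 / \<mu>\<^sup>2) \<partial>DX)"
    unfolding barrier_slope_def using int_slope by (simp add: prob_space)
  also have "\<dots> \<le> (\<integral>x. (\<Sum>a\<in>UNIV. ln (?M' x a)) - (\<Sum>a\<in>UNIV. ln (?W' x a)) \<partial>DX)"
    using int_slope int_W int_mix pointwise by (intro integral_mono) auto
  also have "\<dots> = log_barrier DX \<mu> (policy_mix t Z W) - log_barrier DX \<mu> W"
    unfolding log_barrier_def using int_mix int_W by (rule Bochner_Integration.integral_diff)
  finally show ?thesis .
qed

lemma inv_prob_risk_le_barrier_slope:
  fixes W Z :: "'x \<Rightarrow> 'a \<Rightarrow> real"
  assumes W: "measurable_policy DX W" and Z: "measurable_policy DX Z"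
  shows "(1 - real CARD('a) * \<mu>) * inv_prob_risk DX \<mu> W Z
    \<le> barrier_slope DX \<mu> W Z + real CARD('a) * (1 - \<mu>)"
proof -
  have "policy W" using W unfolding measurable_policy_def by auto
  have "(1 - real CARD('a) * \<mu>) * inv_prob_risk DX \<mu> W Z
      = (\<integral>x. (1 - real CARD('a) * \<mu>) * (\<Sum>a\<in>UNIV. Z x a * (1 / smooth_policy \<mu> W x a)) \<partial>DX)"
    unfolding inv_prob_risk_def by simp
  also have "\<dots> \<le> (\<integral>x. (\<Sum>a\<in>UNIV. (smooth_policy \<mu> Z x a - smooth_policy \<mu> W x a)
      / smooth_policy \<mu> W x a) + real CARD('a) * (1 - \<mu>) \<partial>DX)"
    using integrable_inv_prob_risk[OF W Z] integrable_barrier_slope[OF W Z]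
      inv_prob_sum_le_slope[OF \<open>policy W\<close> mu_pos mu_le]
    by (intro integral_mono) auto
  also have "\<dots> = barrier_slope DX \<mu> W Z + real CARD('a) * (1 - \<mu>)"
    unfolding barrier_slope_def using integrable_barrier_slope[OF W Z] by (simp add: prob_space)
  finally show ?thesis .
qed

lemma exists_policy_inv_prob_risk_le:
  fixes C :: "('x \<Rightarrow> 'a \<Rightarrow> real) set"
  assumes C: "\<forall>W\<in>C. measurable_policy DX W" "C \<noteq> {}" "policy_convex C"
  shows "\<exists>W\<in>C. \<forall>Z\<in>C. (1 - real CARD('a) * \<mu>) * inv_prob_risk DX \<mu> W Z \<le> real CARD('a)"
proof -
  let ?K = "real CARD('a)" and ?\<Phi> = "log_barrier DX \<mu>"
  have bdd: "bdd_above (?\<Phi> ` C)"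
    using C(1) log_barrier_nonpos unfolding measurable_policy_def bdd_above_def by blast
  define t where "t = \<mu> ^ 3 / 2"
  have "\<mu> \<le> ?K * \<mu>" using mu_pos by simp
  then have "\<mu> \<le> 1" using mu_le by linarith
  then have t: "0 < t" "t \<le> 1"
    using mu_pos power_le_one[of \<mu> 3] unfolding t_def by auto
  define \<delta> where "\<delta> = ?K * (t\<^sup>2 / \<mu>\<^sup>2)"
  have \<delta>: "\<delta> = t * (?K * \<mu>) / 2"
    unfolding \<delta>_def t_def using mu_pos by (simp add: field_simps eval_nat_numeral)
  moreover have "0 < t * (?K * \<mu>)" using t mu_pos by simp
  ultimately have "0 < \<delta>" by simp
  then obtain W where "W \<in> C" and W_near_sup: "Sup (?\<Phi> ` C) - \<delta> < ?\<Phi> W"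
    using less_cSup_iff[OF _ bdd, of "Sup (?\<Phi> ` C) - \<delta>"] C(2) by auto
  show ?thesis
  proof (intro bexI[OF _ \<open>W \<in> C\<close>] ballI)
    fix Z assume "Z \<in> C"
    have mix: "policy_mix t Z W \<in> C" using policy_convex_mix[OF C(3) \<open>W \<in> C\<close> \<open>Z \<in> C\<close>] t by simp
    have "?\<Phi> (policy_mix t Z W) - ?\<Phi> W < \<delta>"
      using cSup_upper[OF imageI[OF mix] bdd] W_near_sup by simp
    moreover have "t * barrier_slope DX \<mu> W Z - \<delta> \<le> ?\<Phi> (policy_mix t Z W) - ?\<Phi> W"
      unfolding \<delta>_def using log_barrier_mix_ge[of W Z t] C(1) \<open>W \<in> C\<close> \<open>Z \<in> C\<close> t by simp
    ultimately have "t * barrier_slope DX \<mu> W Z < t * (?K * \<mu>)" unfolding \<delta> by linarith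
    then have "barrier_slope DX \<mu> W Z < ?K * \<mu>" using t by simp
    then show "(1 - ?K * \<mu>) * inv_prob_risk DX \<mu> W Z \<le> ?K"
      using inv_prob_risk_le_barrier_slope[of W Z] C(1) \<open>W \<in> C\<close> \<open>Z \<in> C\<close> by (simp add: algebra_simps)
  qed
qed

end

theorem lemma1:
  fixes C :: "('x \<Rightarrow> 'a::finite \<Rightarrow> real) set"
    and DX :: "'x measure"
    and \<mu> :: real
  assumes "prob_space DX"
    and "\<forall>W\<in>C. policy W"
    and "\<forall>W\<in>C. \<forall>a. (\<lambda>x. W x a) \<in> borel_measurable DX"
    and "C \<noteq> {}"
    and "compact C"
    and "policy_convex C"
    and "0 < \<mu>" and "\<mu> \<le> 1 / real CARD('a)"
  shows "\<exists>W\<in>C. \<forall>Z\<in>C.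
           ereal (inv_prob_risk DX \<mu> W Z) \<le> ereal (real CARD('a)) / ereal (1 - real CARD('a) * \<mu>)"
proof -
  let ?K = "real CARD('a)"
  have "?K * \<mu> \<le> 1" using assms(8) by (simp add: field_simps)
  moreover have "\<forall>W\<in>C. measurable_policy DX W"
    using assms(2,3) unfolding measurable_policy_def by blast
  ultimately obtain W where "W \<in> C" and W: "\<forall>Z\<in>C. (1 - ?K * \<mu>) * inv_prob_risk DX \<mu> W Z \<le> ?K"
    using exists_policy_inv_prob_risk_le[OF assms(1,7)] assms(4,6) by blast
  show ?thesis
  proof (cases "?K * \<mu> = 1")
    case True
    \<comment> \<open>the bound is \<open>K / 0 = \<infinity>\<close> in \<open>ereal\<close>\<close>
    then show ?thesis using \<open>W \<in> C\<close> by auto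
  next
    case False
    with \<open>?K * \<mu> \<le> 1\<close> have "0 < 1 - ?K * \<mu>" by simp
    then show ?thesis
      using W \<open>W \<in> C\<close> by (auto simp: pos_le_divide_eq mult.commute)
  qed
qed

end
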